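(* Let $I\subset\mathbb R$ be a (not necessarily bounded) closed connected set with $0\in I$, equipped with the usual metric and base point $0$. Let $f\in\mathrm{Lip}_0(I,I)$ be such that $\mathrm{int}(R_{\widehat f})\neq\emptyset$. Then $f\circ f$ is the identity on $I$. In particular $R_{\widehat f}=\mathcal F(I)$.
   Context: $\mathrm{Lip}_0(I,I)$ denotes the Lipschitz maps $f:I\to I$ with $f(0)=0$; $\mathrm{Lip}_0(I)$ the real-valued Lipschitz functions vanishing at $0$ normed by the Lipschitz constant. $\delta:I\to\mathrm{Lip}_0(I)^*$, $\delta(x)(\varphi)=\varphi(x)$; the Lipschitz-free space $\mathcal F(I)$ is the norm-closed linear span of $\delta(I)$. $\widehat f$ is the unique bounded linear operator on $\mathcal F(I)$ with $\widehat f(\delta(x))=\delta(f(x))$. For an operator $T$, $R_T=\{\mu:\liminf_{n}\|T^n\mu-\mu\|=0\}$. *)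

theory Defs
  imports "HOL-Analysis.Analysis"
begin

text \<open>Lip_0(I): real Lipschitz functions on I vanishing at 0. Functions are taken
 extensional (zero outside I) so that each element of Lip_0(I) has a unique representative.\<close>
definition Lip0 :: "real set \<Rightarrow> (real \<Rightarrow> real) set" where
  "Lip0 I = {\<phi>. (\<exists>C. C-lipschitz_on I \<phi>) \<and> \<phi> 0 = 0 \<and> (\<forall>x. x \<notin> I \<longrightarrow> \<phi> x = 0)}"

definition lipconst :: "real set \<Rightarrow> (real \<Rightarrow> real) \<Rightarrow> real" where
  "lipconst I \<phi> = Sup ({0} \<union> {\<bar>\<phi> x - \<phi> y\<bar> / \<bar>x - y\<bar> | x y. x \<in> I \<and> y \<in> I \<and> x \<noteq> y})"

definition Lip0_dual :: "real set \<Rightarrow> ((real \<Rightarrow> real) \<Rightarrow> real) set" where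
  "Lip0_dual I = {\<mu>. (\<forall>\<phi>. \<phi> \<notin> Lip0 I \<longrightarrow> \<mu> \<phi> = 0)
      \<and> (\<forall>\<phi> \<psi> a b. \<phi> \<in> Lip0 I \<longrightarrow> \<psi> \<in> Lip0 I \<longrightarrow>
            \<mu> (\<lambda>x. a * \<phi> x + b * \<psi> x) = a * \<mu> \<phi> + b * \<mu> \<psi>)
      \<and> (\<exists>C. \<forall>\<phi>\<in>Lip0 I. \<bar>\<mu> \<phi>\<bar> \<le> C * lipconst I \<phi>)}"

definition dnorm :: "real set \<Rightarrow> ((real \<Rightarrow> real) \<Rightarrow> real) \<Rightarrow> real" where
  "dnorm I \<mu> = Sup ({0} \<union> {\<bar>\<mu> \<phi>\<bar> | \<phi>. \<phi> \<in> Lip0 I \<and> lipconst I \<phi> \<le> 1})"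

definition dirac :: "real set \<Rightarrow> real \<Rightarrow> (real \<Rightarrow> real) \<Rightarrow> real" where
  "dirac I x = (\<lambda>\<phi>. if \<phi> \<in> Lip0 I then \<phi> x else 0)"

definition dirac_span :: "real set \<Rightarrow> ((real \<Rightarrow> real) \<Rightarrow> real) set" where
  "dirac_span I = {\<mu>. \<exists>(S::nat set) c p. finite S \<and> (\<forall>i\<in>S. p i \<in> I) \<and>
      \<mu> = (\<lambda>\<phi>. \<Sum>i\<in>S. c i * dirac I (p i) \<phi>)}"

definition free_space :: "real set \<Rightarrow> ((real \<Rightarrow> real) \<Rightarrow> real) set" where
  "free_space I = {\<mu> \<in> Lip0_dual I. \<forall>\<epsilon>>0. \<exists>\<nu>\<in>dirac_span I. dnorm I (\<lambda>\<phi>. \<mu> \<phi> - \<nu> \<phi>) < \<epsilon>}"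

definition recurrent_set :: "real set \<Rightarrow> (((real \<Rightarrow> real) \<Rightarrow> real) \<Rightarrow> ((real \<Rightarrow> real) \<Rightarrow> real))
      \<Rightarrow> ((real \<Rightarrow> real) \<Rightarrow> real) set" where
  "recurrent_set I T = {\<mu> \<in> free_space I.
      liminf (\<lambda>n. ereal (dnorm I (\<lambda>\<phi>. (T ^^ n) \<mu> \<phi> - \<mu> \<phi>))) = 0}"

definition nonempty_interior_in_free :: "real set \<Rightarrow> ((real \<Rightarrow> real) \<Rightarrow> real) set \<Rightarrow> bool" where
  "nonempty_interior_in_free I A \<longleftrightarrow> (\<exists>\<mu>\<in>free_space I. \<exists>\<epsilon>>0.
      \<forall>\<nu>\<in>free_space I. dnorm I (\<lambda>\<phi>. \<nu> \<phi> - \<mu> \<phi>) < \<epsilon> \<longrightarrow> \<nu> \<in> A)"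

end

theory Submission
  imports Defs
begin

text \<open>
  If \<open>f \<circ> f \<noteq> id\<close> on \<open>I\<close>, there is an open interval \<open>J \<subseteq> I - {0}\<close> all of whose points \<open>x\<close> have a
  twin \<open>y \<notin> J\<close> whose forward orbit cannot be told apart from that of \<open>x\<close> by functions supported
  in \<open>J\<close>: either \<open>f\<close> is not injective and \<open>f y = f x\<close>, or \<open>f\<close> is strictly monotone and \<open>J\<close> wanders
  under \<open>f\<close>, and then \<open>y = f x\<close> will do.
  Perturb a finitely supported \<open>\<nu>\<close> into \<open>\<mu> = \<nu> + s \<Sum>\<^sub>j (\<delta>(x\<^sub>j) - \<delta>(y\<^sub>j))\<close> with
  \<open>N > 2 |supp \<nu>|\<close> grid points \<open>x\<^sub>j \<in> J\<close>. For each \<open>n \<ge> 1\<close> some grid cell misses the supports of \<open>\<nu>\<close>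
  and \<open>\<widehat>f\<^sup>n \<nu>\<close>; the tent function on that cell takes the value \<open>s r\<close> on \<open>\<mu>\<close> but \<open>0\<close> on \<open>\<widehat>f\<^sup>n \<mu>\<close>,
  so \<open>\<mu>\<close> is not recurrent, and the recurrent vectors have empty interior.
  Conversely, if \<open>f \<circ> f = id\<close> then \<open>\<widehat>f\<^sup>2\<close> is a bounded operator fixing the dense span of \<open>\<delta>(I)\<close>,
  hence the identity, and every vector is recurrent.
\<close>

section \<open>Twinned intervals of interval maps\<close>

text \<open>No function supported in \<open>J\<close> distinguishes the forward orbits of \<open>x\<close> and \<open>y\<close>.\<close>
definition orbits_agree_in :: "(real \<Rightarrow> real) \<Rightarrow> real set \<Rightarrow> real \<Rightarrow> real \<Rightarrow> bool" where
  "orbits_agree_in f J x y \<longleftrightarrow>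
     (\<forall>n\<ge>1. (f ^^ n) x = (f ^^ n) y \<or> (f ^^ n) x \<notin> J \<and> (f ^^ n) y \<notin> J)"

definition twinned :: "(real \<Rightarrow> real) \<Rightarrow> real set \<Rightarrow> real set \<Rightarrow> bool" where
  "twinned f I J \<longleftrightarrow> (\<forall>x\<in>J. \<exists>y\<in>I - J. orbits_agree_in f J x y)"

definition wandering :: "(real \<Rightarrow> real) \<Rightarrow> real set \<Rightarrow> bool" where
  "wandering f J \<longleftrightarrow> (\<forall>t\<in>J. \<forall>n\<ge>1. (f ^^ n) t \<notin> J)"

lemma funpow_mapsto: "f ` A \<subseteq> A \<Longrightarrow> x \<in> A \<Longrightarrow> (f ^^ n) x \<in> A"
  by (induction n) auto

lemma connected_between_subset:
  fixes a b :: real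
  assumes "connected I" "a \<in> I" "b \<in> I"
  shows "{min a b<..<max a b} \<subseteq> I"
proof -
  have "min a b \<in> I" "max a b \<in> I" using assms(2,3) by (auto simp: min_def max_def)
  hence "{min a b..max a b} \<subseteq> I" by (rule connected_contains_Icc[OF assms(1)])
  thus ?thesis by auto
qed

lemma twinned_subset: "twinned f I J \<Longrightarrow> J' \<subseteq> J \<Longrightarrow> twinned f I J'"
  unfolding twinned_def orbits_agree_in_def by blast

lemma twinned_if_wandering:
  assumes "wandering f J" "f ` I \<subseteq> I" "J \<subseteq> I"
  shows "twinned f I J"
  unfolding twinned_def
proof
  fix x assume x: "x \<in> J"
  have orbit: "(f ^^ n) x \<notin> J" if "n \<ge> 1" for n
    using assms(1) x that unfolding wandering_def by blast
  have "f x \<notin> J" using orbit[of 1] by simp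
  moreover have "orbits_agree_in f J x (f x)"
    unfolding orbits_agree_in_def
  proof (intro allI impI disjI2 conjI)
    fix n :: nat assume "1 \<le> n"
    show "(f ^^ n) x \<notin> J" using orbit \<open>1 \<le> n\<close> .
    have "(f ^^ n) (f x) = (f ^^ Suc n) x" by (simp only: funpow_Suc_right comp_apply)
    thus "(f ^^ n) (f x) \<notin> J" using orbit[of "Suc n"] by simp
  qed
  ultimately show "\<exists>y\<in>I - J. orbits_agree_in f J x y" using assms(2,3) x by blast
qed

lemma orbits_agree_in_if_eq_image: "f y = f x \<Longrightarrow> orbits_agree_in f J x y"
  unfolding orbits_agree_in_def
proof (intro allI impI disjI1)
  fix n :: nat assume "f y = f x" "1 \<le> n"
  then obtain m where "n = Suc m" by (cases n) auto
  thus "(f ^^ n) x = (f ^^ n) y" using \<open>f y = f x\<close> by (simp only: funpow_Suc_right comp_apply)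
qed

lemma subinterval_avoiding:
  fixes c :: real assumes "\<alpha> < \<beta>"
  shows "\<exists>\<alpha>' \<beta>'. \<alpha>' < \<beta>' \<and> {\<alpha>'<..<\<beta>'} \<subseteq> {\<alpha><..<\<beta>} \<and> c \<notin> {\<alpha>'<..<\<beta>'}"
proof (cases "c \<in> {\<alpha><..<\<beta>}")
  case True thus ?thesis by (intro exI[of _ c] exI[of _ \<beta>]) auto
qed (use assms in blast)

lemma shared_values_near_max:
  fixes g :: "real \<Rightarrow> real"
  assumes "a < b" and cont: "continuous_on {a..b} g" and "g a = g b" and "c \<in> {a..b}" "g a < g c"
  shows "\<exists>\<alpha> \<beta>. \<alpha> < \<beta> \<and> {\<alpha><..<\<beta>} \<subseteq> {a..b} \<and>
           (\<forall>x\<in>{\<alpha><..<\<beta>}. \<exists>y\<in>{a..b} - {\<alpha><..<\<beta>}. g y = g x)"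
proof -
  obtain m where m: "m \<in> {a..b}" "\<forall>y\<in>{a..b}. g y \<le> g m"
    using continuous_attains_sup[OF _ _ cont] assms(1) by auto
  have "g c \<le> g m" using m assms(4) by blast
  hence "g b < g m" using assms(3,5) by linarith
  hence "a < m" "m < b" using m(1) assms(3) by (auto simp: less_eq_real_def)
  obtain d where "d > 0" and d: "\<forall>x\<in>{a..b}. dist x m < d \<longrightarrow> dist (g x) (g m) < g m - g b"
    using cont m(1) \<open>g b < g m\<close> unfolding continuous_on_iff
    by (elim ballE allE[of _ "g m - g b"]) auto
  define \<alpha> where "\<alpha> = max a (m - d)"
  have "\<exists>y\<in>{a..b} - {\<alpha><..<m}. g y = g x" if x: "x \<in> {\<alpha><..<m}" for x
  proof -
    have "x \<in> {a..b}" "dist x m < d" using x \<open>m < b\<close> by (auto simp: \<alpha>_def dist_real_def)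
    hence "dist (g x) (g m) < g m - g b" using d by blast
    hence "g b \<le> g x" by (simp add: dist_real_def abs_less_iff)
    moreover have "g x \<le> g m" using m \<open>x \<in> {a..b}\<close> by blast
    moreover have "continuous_on {m..b} g"
      by (rule continuous_on_subset[OF cont]) (use \<open>a < m\<close> in auto)
    ultimately obtain y where "m \<le> y" "y \<le> b" "g y = g x"
      using IVT2'[of g b "g x" m] \<open>m < b\<close> by auto
    thus ?thesis using \<open>a < m\<close> by (intro bexI[of _ y]) auto
  qed
  moreover have "\<alpha> < m" "{\<alpha><..<m} \<subseteq> {a..b}"
    using \<open>d > 0\<close> \<open>a < m\<close> \<open>m < b\<close> by (auto simp: \<alpha>_def)
  ultimately show ?thesis by blast
qed

lemma shared_values_interval:
  fixes g :: "real \<Rightarrow> real"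
  assumes "a < b" and cont: "continuous_on {a..b} g" and "g a = g b"
  shows "\<exists>\<alpha> \<beta>. \<alpha> < \<beta> \<and> {\<alpha><..<\<beta>} \<subseteq> {a..b} \<and>
           (\<forall>x\<in>{\<alpha><..<\<beta>}. \<exists>y\<in>{a..b} - {\<alpha><..<\<beta>}. g y = g x)"
proof (cases "\<exists>c\<in>{a..b}. g a < g c")
  case True
  then obtain c where "c \<in> {a..b}" "g a < g c" by blast
  from shared_values_near_max[OF assms this] show ?thesis .
next
  case not_above: False
  show ?thesis
  proof (cases "\<exists>c\<in>{a..b}. g c < g a")
    case True
    then obtain c where c: "c \<in> {a..b}" "- g a < - g c" by auto
    have "continuous_on {a..b} (\<lambda>x. - g x)" using cont by (intro continuous_intros)
    moreover have "- g a = - g b" using assms(3) by simp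
    ultimately obtain \<alpha> \<beta> where "\<alpha> < \<beta>" "{\<alpha><..<\<beta>} \<subseteq> {a..b}"
      and "\<forall>x\<in>{\<alpha><..<\<beta>}. \<exists>y\<in>{a..b} - {\<alpha><..<\<beta>}. - g y = - g x"
      using shared_values_near_max[OF assms(1) _ _ c] by blast
    moreover from this(3) have "\<forall>x\<in>{\<alpha><..<\<beta>}. \<exists>y\<in>{a..b} - {\<alpha><..<\<beta>}. g y = g x"
      by simp
    ultimately show ?thesis by blast
  next
    case False
    have const: "g c = g a" if "c \<in> {a..b}" for c
      using that not_above False by (meson linorder_neqE_linordered_idom)
    have "\<exists>y\<in>{a..b} - {a<..<b}. g y = g x" if "x \<in> {a<..<b}" for x
      using const[of x] that assms(1) by (intro bexI[of _ a]) auto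
    with assms(1) show ?thesis by (intro exI[of _ a] exI[of _ b]) auto
  qed
qed

lemma twinned_if_not_inj:
  assumes "connected I" "continuous_on I f" "\<not> inj_on f I"
  shows "\<exists>\<alpha> \<beta>. \<alpha> < \<beta> \<and> {\<alpha><..<\<beta>} \<subseteq> I \<and> twinned f I {\<alpha><..<\<beta>}"
proof -
  obtain u v where "u \<in> I" "v \<in> I" "u \<noteq> v" "f u = f v"
    using assms(3) unfolding inj_on_def by blast
  then obtain a b where ab: "a \<in> I" "b \<in> I" "a < b" "f a = f b"
    by (metis linorder_neqE_linordered_idom)
  have sub: "{a..b} \<subseteq> I" using connected_contains_Icc[OF assms(1) ab(1,2)] .
  have "continuous_on {a..b} f" using assms(2) sub by (rule continuous_on_subset)
  then obtain \<alpha> \<beta> where J: "\<alpha> < \<beta>" "{\<alpha><..<\<beta>} \<subseteq> {a..b}"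
    and twin: "\<forall>x\<in>{\<alpha><..<\<beta>}. \<exists>y\<in>{a..b} - {\<alpha><..<\<beta>}. f y = f x"
    using shared_values_interval[OF ab(3) _ ab(4)] by blast
  have "twinned f I {\<alpha><..<\<beta>}"
    using twin sub orbits_agree_in_if_eq_image unfolding twinned_def by blast
  thus ?thesis using J sub by (intro exI[of _ \<alpha>] exI[of _ \<beta>]) auto
qed

lemma mono_on_orbit:
  fixes h :: "'a::preorder \<Rightarrow> 'a"
  assumes "mono_on I h" "h ` I \<subseteq> I" "t \<in> I"
  shows mono_on_orbit_increasing: "t \<le> h t \<Longrightarrow> h t \<le> (h ^^ Suc n) t"
    and mono_on_orbit_decreasing: "h t \<le> t \<Longrightarrow> (h ^^ Suc n) t \<le> h t"
proof -
  note I = funpow_mapsto[OF assms(2,3)]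
  show "h t \<le> (h ^^ Suc n) t" if "t \<le> h t"
  proof (induction n)
    case (Suc n)
    have "h t \<le> h (h t)" by (rule mono_onD[OF assms(1)]) (use that assms(2,3) in auto)
    also have "\<dots> \<le> h ((h ^^ Suc n) t)" by (rule mono_onD[OF assms(1)]) (use Suc I assms(2,3) in auto)
    finally show ?case by simp
  qed simp
  show "(h ^^ Suc n) t \<le> h t" if "h t \<le> t"
  proof (induction n)
    case (Suc n)
    have "h ((h ^^ Suc n) t) \<le> h (h t)" by (rule mono_onD[OF assms(1)]) (use Suc I assms(2,3) in auto)
    also have "\<dots> \<le> h t" by (rule mono_onD[OF assms(1)]) (use that assms(2,3) in auto)
    finally show ?case by simp
  qed simp
qed

lemma wandering_if_strict_mono_on:
  fixes h :: "real \<Rightarrow> real"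
  assumes mono: "strict_mono_on I h" and hI: "h ` I \<subseteq> I" and "connected I" "x \<in> I"
  shows "wandering h {min x (h x)<..<max x (h x)}"
  unfolding wandering_def
proof (intro ballI allI impI)
  fix t and n :: nat assume t: "t \<in> {min x (h x)<..<max x (h x)}" and "1 \<le> n"
  then obtain m where n: "n = Suc m" by (cases n) auto
  have "t \<in> I" using t connected_between_subset[OF \<open>connected I\<close> \<open>x \<in> I\<close>] hI \<open>x \<in> I\<close> by blast
  have mono': "mono_on I h" using mono by (rule strict_mono_on_imp_mono_on)
  show "(h ^^ n) t \<notin> {min x (h x)<..<max x (h x)}"
  proof (cases "x < h x")
    case True
    hence "x < t" "t < h x" using t by auto
    hence "h x < h t" using strict_mono_onD[OF mono \<open>x \<in> I\<close> \<open>t \<in> I\<close>] by blast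
    hence "h x < (h ^^ n) t"
      using mono_on_orbit_increasing[OF mono' hI \<open>t \<in> I\<close>, of m] \<open>t < h x\<close> n by simp
    thus ?thesis using True by simp
  next
    case False
    hence "h x < t" "t < x" using t by auto
    hence "h t < h x" using strict_mono_onD[OF mono \<open>t \<in> I\<close> \<open>x \<in> I\<close>] by blast
    hence "(h ^^ n) t < h x"
      using mono_on_orbit_decreasing[OF mono' hI \<open>t \<in> I\<close>, of m] \<open>h x < t\<close> n by simp
    thus ?thesis using False by simp
  qed
qed

lemma sgn_orbit_if_strict_antimono_on:
  fixes f :: "real \<Rightarrow> real"
  assumes anti: "strict_antimono_on I f" and fI: "f ` I \<subseteq> I" and "0 \<in> I" "f 0 = 0" "t \<in> I"
  shows "sgn ((f ^^ n) t) = (-1) ^ n * sgn t"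
proof -
  have flip: "sgn (f s) = - sgn s" if "s \<in> I" for s
  proof (cases s "0::real" rule: linorder_cases)
    case less
    hence "f 0 < f s" using monotone_onD[OF anti that \<open>0 \<in> I\<close>] by blast
    thus ?thesis using less \<open>f 0 = 0\<close> by simp
  next
    case equal
    thus ?thesis using \<open>f 0 = 0\<close> by simp
  next
    case greater
    hence "f s < f 0" using monotone_onD[OF anti \<open>0 \<in> I\<close> that] by blast
    thus ?thesis using greater \<open>f 0 = 0\<close> by simp
  qed
  show ?thesis
  proof (induction n)
    case (Suc n)
    thus ?case using flip[OF funpow_mapsto[OF fI \<open>t \<in> I\<close>, of n]] by simp
  qed simp
qed

text \<open>
  Even iterates are iterates of the increasing map \<open>f \<circ> f\<close>; odd iterates flip the sign, hence leave
  the interval between \<open>x\<close> and \<open>f (f x)\<close>, which lies on one side of \<open>0\<close>.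
\<close>
lemma wandering_if_strict_antimono_on:
  fixes f :: "real \<Rightarrow> real"
  assumes anti: "strict_antimono_on I f" and fI: "f ` I \<subseteq> I" and "connected I" "0 \<in> I" "f 0 = 0"
    and "x \<in> I"
  shows "wandering f {min x (f (f x))<..<max x (f (f x))}"
proof -
  define h where "h = f ^^ 2"
  have h_eq: "h t = f (f t)" for t by (simp add: h_def numeral_2_eq_2)
  let ?J = "{min x (h x)<..<max x (h x)}"
  have hI: "h ` I \<subseteq> I" using fI by (auto simp: h_eq)
  have "strict_mono_on I h"
  proof (rule monotone_onI)
    fix a b assume "a \<in> I" "b \<in> I" "a < b"
    hence "f b < f a" using monotone_onD[OF anti] by blast
    moreover have "f a \<in> I" "f b \<in> I" using fI \<open>a \<in> I\<close> \<open>b \<in> I\<close> by auto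
    ultimately show "h a < h b" unfolding h_eq using monotone_onD[OF anti] by blast
  qed
  hence wander_h: "wandering h ?J" using wandering_if_strict_mono_on hI assms(3,6) by blast
  have sgn_J: "sgn s = sgn x" if "s \<in> ?J" for s
  proof -
    have "sgn (h x) = sgn x"
      using sgn_orbit_if_strict_antimono_on[OF assms(1-2,4-6), of 2] by (simp add: h_def)
    thus ?thesis using that by (cases x "0::real" rule: linorder_cases) (auto simp: sgn_if split: if_splits)
  qed
  have "(f ^^ n) t \<notin> ?J" if t: "t \<in> ?J" and "n \<ge> 1" for t n
  proof (cases "even n")
    case True
    then obtain k where k: "n = 2 * k" "k \<ge> 1" using \<open>n \<ge> 1\<close> by (auto elim!: evenE)
    have "(f ^^ n) t = (h ^^ k) t" by (simp add: h_def k(1) funpow_mult)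
    thus ?thesis using wander_h t k(2) unfolding wandering_def by simp
  next
    case False
    have "t \<in> I" using t connected_between_subset[OF assms(3,6)] hI \<open>x \<in> I\<close> by blast
    hence "sgn ((f ^^ n) t) = - sgn x"
      using sgn_orbit_if_strict_antimono_on[OF assms(1-2,4-5)] sgn_J[OF t] False by simp
    moreover have "sgn x \<noteq> 0"
      using sgn_J[OF t] t by (auto simp: sgn_if split: if_splits)
    ultimately show ?thesis using sgn_J by force
  qed
  thus ?thesis unfolding wandering_def h_eq by blast
qed

lemma twinned_interval_if_not_involution:
  fixes f :: "real \<Rightarrow> real"
  assumes "connected I" "continuous_on I f" "f ` I \<subseteq> I" "0 \<in> I" "f 0 = 0"
    and "x \<in> I" "f (f x) \<noteq> x"
  shows "\<exists>\<alpha> \<beta>. \<alpha> < \<beta> \<and> {\<alpha><..<\<beta>} \<subseteq> I \<and> twinned f I {\<alpha><..<\<beta>}"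
proof -
  have between: "min a b < max a b" "{min a b<..<max a b} \<subseteq> I" if "a \<in> I" "b \<in> I" "a \<noteq> b" for a b
    using connected_between_subset[OF assms(1) that(1,2)] that(3) by (auto simp: min_def max_def)
  have "inj_on f I \<longleftrightarrow> strict_mono_on I f \<or> strict_antimono_on I f"
    using injective_eq_monotone_map assms(1,2) is_interval_connected_1 by blast
  then consider "\<not> inj_on f I" | "strict_mono_on I f" | "strict_antimono_on I f" by blast
  then show ?thesis
  proof cases
    case 1
    from twinned_if_not_inj[OF assms(1,2) this] show ?thesis .
  next
    case 2
    have "f x \<in> I" "f x \<noteq> x" using assms(3,6,7) by auto
    with between[OF assms(6)] wandering_if_strict_mono_on[OF 2 assms(3,1,6)]
      twinned_if_wandering[OF _ assms(3)]
    show ?thesis by (intro exI[of _ "min x (f x)"] exI[of _ "max x (f x)"]) auto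
  next
    case 3
    have "f (f x) \<in> I" using assms(3,6) by auto
    with between[OF assms(6)] wandering_if_strict_antimono_on[OF 3 assms(3,1,4,5,6)]
      twinned_if_wandering[OF _ assms(3)] assms(7)
    show ?thesis by (intro exI[of _ "min x (f (f x))"] exI[of _ "max x (f (f x))"]) auto
  qed
qed

lemma twinned_interval_avoiding_0_if_not_involution:
  fixes f :: "real \<Rightarrow> real"
  assumes "connected I" "continuous_on I f" "f ` I \<subseteq> I" "0 \<in> I" "f 0 = 0"
    and "x \<in> I" "f (f x) \<noteq> x"
  shows "\<exists>\<alpha> \<beta>. \<alpha> < \<beta> \<and> {\<alpha><..<\<beta>} \<subseteq> I \<and> 0 \<notin> {\<alpha><..<\<beta>} \<and> twinned f I {\<alpha><..<\<beta>}"
proof -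
  obtain \<alpha> \<beta> where J: "\<alpha> < \<beta>" "{\<alpha><..<\<beta>} \<subseteq> I" "twinned f I {\<alpha><..<\<beta>}"
    using twinned_interval_if_not_involution[OF assms] by blast
  obtain \<alpha>' \<beta>' where "\<alpha>' < \<beta>'" "{\<alpha>'<..<\<beta>'} \<subseteq> {\<alpha><..<\<beta>}" "0 \<notin> {\<alpha>'<..<\<beta>'}"
    using subinterval_avoiding[OF J(1)] by blast
  with J show ?thesis by (intro exI[of _ \<alpha>'] exI[of _ \<beta>']) (auto intro: twinned_subset)
qed

section \<open>The Lipschitz constant and the dual norm\<close>

lemma lipconst_bdd_above:
  assumes "\<phi> \<in> Lip0 I"
  shows "bdd_above ({0} \<union> {\<bar>\<phi> x - \<phi> y\<bar> / \<bar>x - y\<bar> | x y. x \<in> I \<and> y \<in> I \<and> x \<noteq> y})"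
proof -
  obtain C where C: "C-lipschitz_on I \<phi>" using assms by (auto simp: Lip0_def)
  have "\<bar>\<phi> x - \<phi> y\<bar> / \<bar>x - y\<bar> \<le> C" if "x \<in> I" "y \<in> I" "x \<noteq> y" for x y
    using lipschitz_onD[OF C that(1,2)] that(3) by (simp add: dist_real_def divide_le_eq)
  moreover have "0 \<le> C" using lipschitz_on_nonneg[OF C] .
  ultimately show ?thesis unfolding bdd_above_def by (intro exI[of _ C]) auto
qed

lemma lipconst_nonneg: "\<phi> \<in> Lip0 I \<Longrightarrow> 0 \<le> lipconst I \<phi>"
  unfolding lipconst_def by (rule cSup_upper[OF _ lipconst_bdd_above]) auto

lemma Lip0_abs_diff_le:
  assumes "\<phi> \<in> Lip0 I" "x \<in> I" "y \<in> I"
  shows "\<bar>\<phi> x - \<phi> y\<bar> \<le> lipconst I \<phi> * \<bar>x - y\<bar>"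
proof (cases "x = y")
  case False
  have "\<bar>\<phi> x - \<phi> y\<bar> / \<bar>x - y\<bar> \<le> lipconst I \<phi>"
    unfolding lipconst_def
    by (rule cSup_upper[OF _ lipconst_bdd_above[OF assms(1)]]) (use assms False in auto)
  thus ?thesis using False by (simp add: divide_le_eq)
qed simp

lemma lipconst_le:
  assumes "0 \<le> M" "\<And>x y. x \<in> I \<Longrightarrow> y \<in> I \<Longrightarrow> \<bar>\<phi> x - \<phi> y\<bar> \<le> M * \<bar>x - y\<bar>"
  shows "lipconst I \<phi> \<le> M"
  unfolding lipconst_def by (rule cSup_least) (use assms in \<open>auto simp: divide_le_eq\<close>)

lemma Lip0_lincomb:
  assumes "\<phi> \<in> Lip0 I" "\<psi> \<in> Lip0 I"
  shows "(\<lambda>x. a * \<phi> x + b * \<psi> x) \<in> Lip0 I"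
proof -
  obtain C D where "C-lipschitz_on I \<phi>" "D-lipschitz_on I \<psi>" using assms by (auto simp: Lip0_def)
  hence "(\<bar>a\<bar> * C + \<bar>b\<bar> * D)-lipschitz_on I (\<lambda>x. a * \<phi> x + b * \<psi> x)"
    by (intro lipschitz_on_add lipschitz_on_cmult_real)
  thus ?thesis using assms by (auto simp: Lip0_def)
qed

lemma Lip0_dual_linear:
  "\<mu> \<in> Lip0_dual I \<Longrightarrow> \<phi> \<in> Lip0 I \<Longrightarrow> \<psi> \<in> Lip0 I \<Longrightarrow>
     \<mu> (\<lambda>x. a * \<phi> x + b * \<psi> x) = a * \<mu> \<phi> + b * \<mu> \<psi>"
  by (simp add: Lip0_dual_def)

lemma Lip0_dual_outside: "\<mu> \<in> Lip0_dual I \<Longrightarrow> \<phi> \<notin> Lip0 I \<Longrightarrow> \<mu> \<phi> = 0"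
  by (simp add: Lip0_dual_def)

lemma dnorm_bdd_above:
  assumes "\<mu> \<in> Lip0_dual I"
  shows "bdd_above ({0} \<union> {\<bar>\<mu> \<phi>\<bar> | \<phi>. \<phi> \<in> Lip0 I \<and> lipconst I \<phi> \<le> 1})"
proof -
  obtain C where C: "\<forall>\<phi>\<in>Lip0 I. \<bar>\<mu> \<phi>\<bar> \<le> C * lipconst I \<phi>"
    using assms by (auto simp: Lip0_dual_def)
  have "\<bar>\<mu> \<phi>\<bar> \<le> \<bar>C\<bar>" if "\<phi> \<in> Lip0 I" "lipconst I \<phi> \<le> 1" for \<phi>
  proof -
    have "C * lipconst I \<phi> \<le> \<bar>C\<bar> * lipconst I \<phi>"
      using lipconst_nonneg[OF that(1)] by (intro mult_right_mono) auto
    also have "\<dots> \<le> \<bar>C\<bar>" using that(2) by (simp add: mult_left_le)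
    finally show ?thesis using C that(1) by force
  qed
  thus ?thesis unfolding bdd_above_def by (intro exI[of _ "\<bar>C\<bar>"]) auto
qed

lemma abs_le_dnorm:
  "\<mu> \<in> Lip0_dual I \<Longrightarrow> \<phi> \<in> Lip0 I \<Longrightarrow> lipconst I \<phi> \<le> 1 \<Longrightarrow> \<bar>\<mu> \<phi>\<bar> \<le> dnorm I \<mu>"
  unfolding dnorm_def by (rule cSup_upper[OF _ dnorm_bdd_above]) auto

lemma dnorm_nonneg: "\<mu> \<in> Lip0_dual I \<Longrightarrow> 0 \<le> dnorm I \<mu>"
  unfolding dnorm_def by (rule cSup_upper[OF _ dnorm_bdd_above]) auto

lemma dnorm_le:
  assumes "0 \<le> M" "\<And>\<phi>. \<phi> \<in> Lip0 I \<Longrightarrow> lipconst I \<phi> \<le> 1 \<Longrightarrow> \<bar>\<mu> \<phi>\<bar> \<le> M"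
  shows "dnorm I \<mu> \<le> M"
  unfolding dnorm_def by (rule cSup_least) (use assms in auto)

lemma abs_le_dnorm_mult_lipconst:
  assumes \<mu>: "\<mu> \<in> Lip0_dual I" and \<phi>: "\<phi> \<in> Lip0 I"
  shows "\<bar>\<mu> \<phi>\<bar> \<le> dnorm I \<mu> * lipconst I \<phi>"
proof (rule field_le_epsilon)
  fix e :: real assume "0 < e"
  define L where "L = lipconst I \<phi>"
  define D where "D = dnorm I \<mu>"
  define c where "c = L + e / (D + 1)"
  have "0 \<le> L" "0 \<le> D" using lipconst_nonneg[OF \<phi>] dnorm_nonneg[OF \<mu>] by (simp_all add: L_def D_def)
  hence "0 < c" "L \<le> c" using \<open>0 < e\<close> by (simp_all add: c_def add_nonneg_pos)
  define \<psi> where "\<psi> = (\<lambda>x. (1 / c) * \<phi> x + 0 * \<phi> x)"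
  have \<psi>: "\<psi> \<in> Lip0 I" unfolding \<psi>_def by (rule Lip0_lincomb[OF \<phi> \<phi>])
  have "lipconst I \<psi> \<le> 1"
  proof (rule lipconst_le)
    fix x y assume "x \<in> I" "y \<in> I"
    have "\<bar>\<phi> x - \<phi> y\<bar> \<le> c * \<bar>x - y\<bar>"
      using Lip0_abs_diff_le[OF \<phi> \<open>x \<in> I\<close> \<open>y \<in> I\<close>] \<open>L \<le> c\<close>
      by (simp add: L_def) (meson abs_ge_zero mult_right_mono order_trans)
    thus "\<bar>\<psi> x - \<psi> y\<bar> \<le> 1 * \<bar>x - y\<bar>"
      using \<open>0 < c\<close> by (simp add: \<psi>_def abs_mult divide_simps right_diff_distrib[symmetric] mult.commute)
  qed simp
  have "(\<lambda>x. c * \<psi> x + 0 * \<psi> x) = \<phi>" using \<open>0 < c\<close> by (simp add: \<psi>_def)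
  hence "\<mu> \<phi> = c * \<mu> \<psi>" using Lip0_dual_linear[OF \<mu> \<psi> \<psi>, of c 0] by simp
  hence "\<bar>\<mu> \<phi>\<bar> \<le> c * D"
    using abs_le_dnorm[OF \<mu> \<psi> \<open>lipconst I \<psi> \<le> 1\<close>] \<open>0 < c\<close> by (simp add: D_def abs_mult)
  also have "\<dots> = D * L + e * (D / (D + 1))" using \<open>0 \<le> D\<close> by (simp add: c_def field_simps)
  also have "\<dots> \<le> D * L + e" using \<open>0 \<le> D\<close> \<open>0 < e\<close> by (intro add_left_mono mult_left_le) auto
  finally show "\<bar>\<mu> \<phi>\<bar> \<le> dnorm I \<mu> * lipconst I \<phi> + e" by (simp add: D_def L_def)
qed

lemma Lip0_dual_lincomb:
  assumes "\<mu> \<in> Lip0_dual I" "\<nu> \<in> Lip0_dual I"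
  shows "(\<lambda>\<phi>. a * \<mu> \<phi> + b * \<nu> \<phi>) \<in> Lip0_dual I"
  unfolding Lip0_dual_def
proof (intro CollectI conjI allI impI)
  fix \<phi> assume "\<phi> \<notin> Lip0 I"
  thus "a * \<mu> \<phi> + b * \<nu> \<phi> = 0" using assms by (simp add: Lip0_dual_outside)
next
  fix \<phi> \<psi> c d assume "\<phi> \<in> Lip0 I" "\<psi> \<in> Lip0 I"
  thus "a * \<mu> (\<lambda>x. c * \<phi> x + d * \<psi> x) + b * \<nu> (\<lambda>x. c * \<phi> x + d * \<psi> x)
      = c * (a * \<mu> \<phi> + b * \<nu> \<phi>) + d * (a * \<mu> \<psi> + b * \<nu> \<psi>)"
    using assms by (simp add: Lip0_dual_linear algebra_simps)
next
  have "\<bar>a * \<mu> \<phi> + b * \<nu> \<phi>\<bar> \<le> (\<bar>a\<bar> * dnorm I \<mu> + \<bar>b\<bar> * dnorm I \<nu>) * lipconst I \<phi>"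
    if "\<phi> \<in> Lip0 I" for \<phi>
  proof -
    have "\<bar>a * \<mu> \<phi> + b * \<nu> \<phi>\<bar> \<le> \<bar>a\<bar> * \<bar>\<mu> \<phi>\<bar> + \<bar>b\<bar> * \<bar>\<nu> \<phi>\<bar>"
      by (metis abs_mult abs_triangle_ineq)
    also have "\<dots> \<le> \<bar>a\<bar> * (dnorm I \<mu> * lipconst I \<phi>) + \<bar>b\<bar> * (dnorm I \<nu> * lipconst I \<phi>)"
      using abs_le_dnorm_mult_lipconst[OF _ that] assms by (intro add_mono mult_left_mono) auto
    finally show ?thesis by (simp add: algebra_simps)
  qed
  thus "\<exists>C. \<forall>\<phi>\<in>Lip0 I. \<bar>a * \<mu> \<phi> + b * \<nu> \<phi>\<bar> \<le> C * lipconst I \<phi>" by blast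
qed

lemma dnorm_lincomb_le:
  assumes "\<mu> \<in> Lip0_dual I" "\<nu> \<in> Lip0_dual I"
  shows "dnorm I (\<lambda>\<phi>. a * \<mu> \<phi> + b * \<nu> \<phi>) \<le> \<bar>a\<bar> * dnorm I \<mu> + \<bar>b\<bar> * dnorm I \<nu>"
proof (rule dnorm_le)
  show "0 \<le> \<bar>a\<bar> * dnorm I \<mu> + \<bar>b\<bar> * dnorm I \<nu>" using assms by (simp add: dnorm_nonneg)
  fix \<phi> assume "\<phi> \<in> Lip0 I" "lipconst I \<phi> \<le> 1"
  have "\<bar>a * \<mu> \<phi> + b * \<nu> \<phi>\<bar> \<le> \<bar>a\<bar> * \<bar>\<mu> \<phi>\<bar> + \<bar>b\<bar> * \<bar>\<nu> \<phi>\<bar>"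
    by (metis abs_mult abs_triangle_ineq)
  also have "\<dots> \<le> \<bar>a\<bar> * dnorm I \<mu> + \<bar>b\<bar> * dnorm I \<nu>"
    using abs_le_dnorm[OF _ \<open>\<phi> \<in> Lip0 I\<close> \<open>lipconst I \<phi> \<le> 1\<close>] assms
    by (intro add_mono mult_left_mono) auto
  finally show "\<bar>a * \<mu> \<phi> + b * \<nu> \<phi>\<bar> \<le> \<bar>a\<bar> * dnorm I \<mu> + \<bar>b\<bar> * dnorm I \<nu>" .
qed

lemma zero_in_Lip0_dual: "(\<lambda>\<phi>. 0) \<in> Lip0_dual I"
  unfolding Lip0_dual_def by (auto intro: exI[of _ 0])

lemma dnorm_zero: "dnorm I (\<lambda>\<phi>. 0) = 0"
  by (rule antisym[OF dnorm_le dnorm_nonneg[OF zero_in_Lip0_dual]]) auto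

lemma Lip0_dual_diff:
  "\<mu> \<in> Lip0_dual I \<Longrightarrow> \<nu> \<in> Lip0_dual I \<Longrightarrow> (\<lambda>\<phi>. \<mu> \<phi> - \<nu> \<phi>) \<in> Lip0_dual I"
  using Lip0_dual_lincomb[of \<mu> I \<nu> 1 "-1"] by simp

lemma Lip0_dual_eqI:
  assumes "\<mu> \<in> Lip0_dual I" "\<nu> \<in> Lip0_dual I" "dnorm I (\<lambda>\<phi>. \<mu> \<phi> - \<nu> \<phi>) \<le> 0"
  shows "\<mu> = \<nu>"
proof
  fix \<phi>
  show "\<mu> \<phi> = \<nu> \<phi>"
  proof (cases "\<phi> \<in> Lip0 I")
    case True
    have "\<bar>\<mu> \<phi> - \<nu> \<phi>\<bar> \<le> dnorm I (\<lambda>\<phi>. \<mu> \<phi> - \<nu> \<phi>) * lipconst I \<phi>"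
      using abs_le_dnorm_mult_lipconst[OF Lip0_dual_diff[OF assms(1,2)] True] by simp
    also have "\<dots> \<le> 0" using assms(3) lipconst_nonneg[OF True] by (simp add: mult_nonpos_nonneg)
    finally show ?thesis by simp
  next
    case False
    thus ?thesis using Lip0_dual_outside[OF assms(1) False] Lip0_dual_outside[OF assms(2) False] by simp
  qed
qed

section \<open>Finite combinations of Dirac functionals\<close>

definition dirac_comb :: "real set \<Rightarrow> 'a set \<Rightarrow> ('a \<Rightarrow> real) \<Rightarrow> ('a \<Rightarrow> real) \<Rightarrow> (real \<Rightarrow> real) \<Rightarrow> real"
  where "dirac_comb I K c p = (\<lambda>\<phi>. \<Sum>k\<in>K. c k * dirac I (p k) \<phi>)"

lemma dirac_comb_apply: "\<phi> \<in> Lip0 I \<Longrightarrow> dirac_comb I K c p \<phi> = (\<Sum>k\<in>K. c k * \<phi> (p k))"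
  by (simp add: dirac_comb_def dirac_def)

lemma dirac_spanE:
  assumes "\<mu> \<in> dirac_span I"
  obtains S :: "nat set" and c p where "finite S" "p ` S \<subseteq> I" "\<mu> = dirac_comb I S c p"
  using assms by (auto simp: dirac_span_def dirac_comb_def)

lemma dirac_comb_in_span:
  assumes "finite K" "p ` K \<subseteq> I"
  shows "dirac_comb I K c p \<in> dirac_span I"
proof -
  obtain g where g: "bij_betw g {0..<card K} K" using ex_bij_betw_nat_finite[OF assms(1)] by blast
  have "dirac_comb I K c p = dirac_comb I {0..<card K} (c \<circ> g) (p \<circ> g)"
    unfolding dirac_comb_def by (intro ext) (subst sum.reindex_bij_betw[OF g, symmetric], simp)
  moreover have "\<forall>i\<in>{0..<card K}. (p \<circ> g) i \<in> I" using g assms(2) by (auto simp: bij_betw_def)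
  ultimately show ?thesis unfolding dirac_span_def dirac_comb_def
    by (intro CollectI exI[of _ "{0..<card K}"] exI[of _ "c \<circ> g"] exI[of _ "p \<circ> g"]) auto
qed

lemma dirac_comb_lincomb:
  assumes "finite K" "finite L"
  shows "(\<lambda>\<phi>. a * dirac_comb I K c p \<phi> + b * dirac_comb I L d q \<phi>)
       = dirac_comb I (K <+> L) (case_sum (\<lambda>k. a * c k) (\<lambda>l. b * d l)) (case_sum p q)"
  by (simp add: dirac_comb_def sum.Plus[OF assms] sum_distrib_left o_def mult.assoc)

lemma dirac_span_lincomb:
  assumes "\<mu> \<in> dirac_span I" "\<nu> \<in> dirac_span I"
  shows "(\<lambda>\<phi>. a * \<mu> \<phi> + b * \<nu> \<phi>) \<in> dirac_span I"
proof -
  obtain S :: "nat set" and c p where "finite S" "p ` S \<subseteq> I" "\<mu> = dirac_comb I S c p"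
    using assms(1) by (rule dirac_spanE)
  moreover obtain S' :: "nat set" and c' p' where "finite S'" "p' ` S' \<subseteq> I" "\<nu> = dirac_comb I S' c' p'"
    using assms(2) by (rule dirac_spanE)
  ultimately show ?thesis
    by (auto simp: dirac_comb_lincomb intro!: dirac_comb_in_span split: sum.split)
qed

lemma dirac_in_span: "x \<in> I \<Longrightarrow> dirac I x \<in> dirac_span I"
  using dirac_comb_in_span[of "{()}" "\<lambda>_. x" I "\<lambda>_. 1"] by (simp add: dirac_comb_def)

lemma dirac_comb_in_Lip0_dual:
  assumes "0 \<in> I" "p ` K \<subseteq> I"
  shows "dirac_comb I K c p \<in> Lip0_dual I"
  unfolding Lip0_dual_def
proof (intro CollectI conjI allI impI)
  fix \<phi> assume "\<phi> \<notin> Lip0 I"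
  thus "dirac_comb I K c p \<phi> = 0" by (simp add: dirac_comb_def dirac_def)
next
  fix \<phi> \<psi> a b assume "\<phi> \<in> Lip0 I" "\<psi> \<in> Lip0 I"
  thus "dirac_comb I K c p (\<lambda>x. a * \<phi> x + b * \<psi> x) = a * dirac_comb I K c p \<phi> + b * dirac_comb I K c p \<psi>"
    by (simp add: dirac_comb_apply Lip0_lincomb sum_distrib_left sum.distrib algebra_simps)
next
  have "\<bar>dirac_comb I K c p \<phi>\<bar> \<le> (\<Sum>k\<in>K. \<bar>c k\<bar> * \<bar>p k\<bar>) * lipconst I \<phi>" if \<phi>: "\<phi> \<in> Lip0 I" for \<phi>
  proof -
    have "\<bar>dirac_comb I K c p \<phi>\<bar> \<le> (\<Sum>k\<in>K. \<bar>c k\<bar> * \<bar>\<phi> (p k)\<bar>)"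
      unfolding dirac_comb_apply[OF \<phi>] by (rule order_trans[OF sum_abs]) (simp add: abs_mult)
    also have "\<dots> \<le> (\<Sum>k\<in>K. \<bar>c k\<bar> * (lipconst I \<phi> * \<bar>p k\<bar>))"
    proof (rule sum_mono, rule mult_left_mono)
      fix k assume "k \<in> K"
      hence "\<bar>\<phi> (p k) - \<phi> 0\<bar> \<le> lipconst I \<phi> * \<bar>p k - 0\<bar>"
        using assms by (intro Lip0_abs_diff_le[OF \<phi>]) auto
      thus "\<bar>\<phi> (p k)\<bar> \<le> lipconst I \<phi> * \<bar>p k\<bar>" using \<phi> by (simp add: Lip0_def)
    qed simp
    also have "\<dots> = (\<Sum>k\<in>K. \<bar>c k\<bar> * \<bar>p k\<bar>) * lipconst I \<phi>"
      by (simp add: sum_distrib_right mult.assoc mult.commute[of "lipconst I \<phi>"])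
    finally show ?thesis .
  qed
  thus "\<exists>C. \<forall>\<phi>\<in>Lip0 I. \<bar>dirac_comb I K c p \<phi>\<bar> \<le> C * lipconst I \<phi>" by blast
qed

lemma free_space_Lip0_dual: "\<mu> \<in> free_space I \<Longrightarrow> \<mu> \<in> Lip0_dual I"
  by (simp add: free_space_def)

lemma free_space_approxE:
  assumes "\<mu> \<in> free_space I" "0 < e"
  obtains \<nu> where "\<nu> \<in> dirac_span I" "dnorm I (\<lambda>\<phi>. \<mu> \<phi> - \<nu> \<phi>) < e"
  using assms by (auto simp: free_space_def)

lemma dirac_span_subset_free_space:
  assumes "0 \<in> I" shows "dirac_span I \<subseteq> free_space I"
proof
  fix \<mu> assume "\<mu> \<in> dirac_span I"
  then obtain S :: "nat set" and c p where "p ` S \<subseteq> I" "\<mu> = dirac_comb I S c p" by (rule dirac_spanE)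
  hence "\<mu> \<in> Lip0_dual I" using dirac_comb_in_Lip0_dual[OF assms] by blast
  thus "\<mu> \<in> free_space I"
    using \<open>\<mu> \<in> dirac_span I\<close> by (auto simp: free_space_def dnorm_zero intro!: bexI[of _ \<mu>])
qed

lemma free_space_lincomb:
  assumes "0 \<in> I" "\<mu> \<in> free_space I" "\<nu> \<in> free_space I"
  shows "(\<lambda>\<phi>. a * \<mu> \<phi> + b * \<nu> \<phi>) \<in> free_space I"
  unfolding free_space_def
proof (intro CollectI conjI allI impI)
  show "(\<lambda>\<phi>. a * \<mu> \<phi> + b * \<nu> \<phi>) \<in> Lip0_dual I"
    using assms by (intro Lip0_dual_lincomb free_space_Lip0_dual)
  fix e :: real assume "0 < e"
  define e' where "e' = e / (\<bar>a\<bar> + \<bar>b\<bar> + 1)"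
  have "0 < e'" using \<open>0 < e\<close> by (simp add: e'_def add_nonneg_pos)
  obtain \<mu>' where \<mu>': "\<mu>' \<in> dirac_span I" "dnorm I (\<lambda>\<phi>. \<mu> \<phi> - \<mu>' \<phi>) < e'"
    using assms(2) \<open>0 < e'\<close> by (rule free_space_approxE)
  obtain \<nu>' where \<nu>': "\<nu>' \<in> dirac_span I" "dnorm I (\<lambda>\<phi>. \<nu> \<phi> - \<nu>' \<phi>) < e'"
    using assms(3) \<open>0 < e'\<close> by (rule free_space_approxE)
  have dual: "(\<lambda>\<phi>. \<mu> \<phi> - \<mu>' \<phi>) \<in> Lip0_dual I" "(\<lambda>\<phi>. \<nu> \<phi> - \<nu>' \<phi>) \<in> Lip0_dual I"
    using assms \<mu>'(1) \<nu>'(1) dirac_span_subset_free_space[OF assms(1)]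
    by (simp_all add: Lip0_dual_diff free_space_Lip0_dual subset_iff)
  have "dnorm I (\<lambda>\<phi>. a * \<mu> \<phi> + b * \<nu> \<phi> - (a * \<mu>' \<phi> + b * \<nu>' \<phi>))
      = dnorm I (\<lambda>\<phi>. a * (\<mu> \<phi> - \<mu>' \<phi>) + b * (\<nu> \<phi> - \<nu>' \<phi>))"
    by (simp add: algebra_simps)
  also have "\<dots> \<le> \<bar>a\<bar> * e' + \<bar>b\<bar> * e'"
    using dnorm_lincomb_le[OF dual, of a b] \<mu>'(2) \<nu>'(2)
    by (smt (verit, best) abs_ge_zero mult_left_mono)
  also have "\<dots> < (\<bar>a\<bar> + \<bar>b\<bar> + 1) * e'"
    using \<open>0 < e'\<close> by (simp add: algebra_simps)
  also have "\<dots> = e"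
    by (simp add: e'_def add_nonneg_pos)
  finally show "\<exists>\<nu>''\<in>dirac_span I. dnorm I (\<lambda>\<phi>. a * \<mu> \<phi> + b * \<nu> \<phi> - \<nu>'' \<phi>) < e"
    using dirac_span_lincomb[OF \<mu>'(1) \<nu>'(1), of a b]
    by (intro bexI[of _ "\<lambda>\<phi>. a * \<mu>' \<phi> + b * \<nu>' \<phi>"])
qed

definition dirac_pairs ::
    "real set \<Rightarrow> 'a set \<Rightarrow> ('a \<Rightarrow> real) \<Rightarrow> ('a \<Rightarrow> real) \<Rightarrow> ('a \<Rightarrow> real) \<Rightarrow> (real \<Rightarrow> real) \<Rightarrow> real"
  where "dirac_pairs I K c x y = (\<lambda>\<phi>. \<Sum>k\<in>K. c k * (dirac I (x k) \<phi> - dirac I (y k) \<phi>))"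

lemma dirac_pairs_eq_dirac_comb:
  "dirac_pairs I K c x y = (\<lambda>\<phi>. 1 * dirac_comb I K c x \<phi> + (-1) * dirac_comb I K c y \<phi>)"
  by (simp add: dirac_pairs_def dirac_comb_def sum_subtractf right_diff_distrib)

lemma dirac_pairs_apply:
  "\<phi> \<in> Lip0 I \<Longrightarrow> dirac_pairs I K c x y \<phi> = (\<Sum>k\<in>K. c k * (\<phi> (x k) - \<phi> (y k)))"
  by (simp add: dirac_pairs_def dirac_def)

lemma dirac_pairs_in_span:
  "finite K \<Longrightarrow> x ` K \<subseteq> I \<Longrightarrow> y ` K \<subseteq> I \<Longrightarrow> dirac_pairs I K c x y \<in> dirac_span I"
  unfolding dirac_pairs_eq_dirac_comb by (intro dirac_span_lincomb dirac_comb_in_span) assumption+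

lemma dirac_comb_plus_pairs_in_span:
  assumes "finite S" "p ` S \<subseteq> I" "finite K" "x ` K \<subseteq> I" "y ` K \<subseteq> I"
  shows "(\<lambda>\<phi>. dirac_comb I S c p \<phi> + dirac_pairs I K d x y \<phi>) \<in> dirac_span I"
proof -
  have "dirac_comb I S c p \<in> dirac_span I" by (rule dirac_comb_in_span[OF assms(1,2)])
  moreover have "dirac_pairs I K d x y \<in> dirac_span I" by (rule dirac_pairs_in_span[OF assms(3-5)])
  ultimately have "(\<lambda>\<phi>. 1 * dirac_comb I S c p \<phi> + 1 * dirac_pairs I K d x y \<phi>) \<in> dirac_span I"
    by (rule dirac_span_lincomb)
  thus ?thesis by simp
qed

lemma dnorm_dirac_pairs_le:
  assumes "x ` K \<subseteq> I" "y ` K \<subseteq> I"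
  shows "dnorm I (dirac_pairs I K c x y) \<le> (\<Sum>k\<in>K. \<bar>c k\<bar> * \<bar>x k - y k\<bar>)"
proof (rule dnorm_le)
  fix \<phi> assume \<phi>: "\<phi> \<in> Lip0 I" "lipconst I \<phi> \<le> 1"
  have "\<bar>\<phi> (x k) - \<phi> (y k)\<bar> \<le> \<bar>x k - y k\<bar>" if "k \<in> K" for k
  proof -
    have "x k \<in> I" "y k \<in> I" using assms that by auto
    hence "\<bar>\<phi> (x k) - \<phi> (y k)\<bar> \<le> lipconst I \<phi> * \<bar>x k - y k\<bar>" by (rule Lip0_abs_diff_le[OF \<phi>(1)])
    also have "\<dots> \<le> 1 * \<bar>x k - y k\<bar>" by (rule mult_right_mono[OF \<phi>(2) abs_ge_zero])
    finally show ?thesis by simp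
  qed
  hence "(\<Sum>k\<in>K. \<bar>c k * (\<phi> (x k) - \<phi> (y k))\<bar>) \<le> (\<Sum>k\<in>K. \<bar>c k\<bar> * \<bar>x k - y k\<bar>)"
    by (intro sum_mono) (simp add: abs_mult mult_left_mono)
  thus "\<bar>dirac_pairs I K c x y \<phi>\<bar> \<le> (\<Sum>k\<in>K. \<bar>c k\<bar> * \<bar>x k - y k\<bar>)"
    unfolding dirac_pairs_apply[OF \<phi>(1)] by (rule order_trans[OF sum_abs])
qed (simp add: sum_nonneg)

section \<open>Tent functions on a grid\<close>

definition tent :: "real \<Rightarrow> real \<Rightarrow> real \<Rightarrow> real"
  where "tent c r t = max 0 (r - \<bar>t - c\<bar>)"

lemma tent_eq_0: "t \<notin> {c - r<..<c + r} \<Longrightarrow> tent c r t = 0"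
  by (auto simp: tent_def)

lemma tent_centre: "0 \<le> r \<Longrightarrow> tent c r c = r"
  by (simp add: tent_def)

lemma tent_Lip0:
  assumes "{c - r<..<c + r} \<subseteq> I" "0 \<notin> {c - r<..<c + r}"
  shows "tent c r \<in> Lip0 I" and "lipconst I (tent c r) \<le> 1"
proof -
  have lip: "\<bar>tent c r a - tent c r b\<bar> \<le> 1 * \<bar>a - b\<bar>" for a b
  proof -
    have "\<bar>tent c r a - tent c r b\<bar> \<le> \<bar>\<bar>b - c\<bar> - \<bar>a - c\<bar>\<bar>" by (simp add: tent_def max_def)
    also have "\<dots> \<le> \<bar>a - b\<bar>" using abs_triangle_ineq3[of "b - c" "a - c"] by (simp add: abs_minus_commute)
    finally show ?thesis by simp
  qed
  have "1-lipschitz_on I (tent c r)" by (rule lipschitz_onI) (use lip in \<open>auto simp: dist_real_def\<close>)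
  moreover have "tent c r x = 0" if "x \<notin> I \<or> x = 0" for x
    using that assms by (intro tent_eq_0) auto
  ultimately show "tent c r \<in> Lip0 I" unfolding Lip0_def by blast
  show "lipconst I (tent c r) \<le> 1" by (rule lipconst_le) (use lip in auto)
qed

lemma pigeonhole_disjoint_family:
  assumes "disjoint_family_on C {..<N}" "finite P" "card P < N"
  shows "\<exists>k<N. C k \<inter> P = {}"
proof (rule ccontr)
  assume "\<not> (\<exists>k<N. C k \<inter> P = {})"
  hence "\<forall>k\<in>{..<N}. \<exists>t. t \<in> C k \<inter> P" by blast
  from bchoice[OF this] obtain g where g: "\<forall>k\<in>{..<N}. g k \<in> C k \<inter> P" ..
  have "inj_on g {..<N}"
  proof (rule inj_onI)
    fix j k assume jk: "j \<in> {..<N}" "k \<in> {..<N}" "g j = g k"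
    show "j = k"
    proof (rule ccontr)
      assume "j \<noteq> k"
      hence "C j \<inter> C k = {}" by (rule disjoint_family_onD[OF assms(1) jk(1,2)])
      moreover have "g j \<in> C j" "g k \<in> C k" using g jk(1,2) by auto
      ultimately show False using jk(3) by auto
    qed
  qed
  hence "card {..<N} \<le> card P" by (rule card_inj_on_le) (use g assms(2) in auto)
  thus False using assms(3) by simp
qed

lemma grid_cells:
  fixes \<alpha> r :: real and A :: "nat set"
  assumes "0 < r" and x: "\<And>j. x j = \<alpha> + (2 * real j + 1) * r"
  shows "disjoint_family_on (\<lambda>j. {x j - r<..<x j + r}) A"
    and "j < N \<Longrightarrow> {x j - r<..<x j + r} \<subseteq> {\<alpha><..<\<alpha> + 2 * real N * r}"
    and "j < N \<Longrightarrow> x j \<in> {\<alpha><..<\<alpha> + 2 * real N * r}"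
proof -
  have below: "(2 * real j + 2) * r \<le> 2 * real k * r" if "j < k" for j k :: nat
    using that \<open>0 < r\<close> by (intro mult_right_mono) auto
  have sep: "x j + r \<le> x k - r" if "j < k" for j k
    using below[OF that] by (simp add: x algebra_simps)
  show "disjoint_family_on (\<lambda>j. {x j - r<..<x j + r}) A"
    unfolding disjoint_family_on_def
  proof (intro ballI impI)
    fix j k :: nat assume "j \<noteq> k"
    then consider "j < k" | "k < j" by linarith
    thus "{x j - r<..<x j + r} \<inter> {x k - r<..<x k + r} = {}"
    proof cases
      case 1
      thus ?thesis using sep[OF 1] by auto
    next
      case 2
      thus ?thesis using sep[OF 2] by auto
    qed
  qed
  show sub: "{x j - r<..<x j + r} \<subseteq> {\<alpha><..<\<alpha> + 2 * real N * r}" if "j < N"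
  proof -
    have ends: "x j - r = \<alpha> + 2 * real j * r" "x j + r = \<alpha> + (2 * real j + 2) * r"
      by (simp_all add: x algebra_simps)
    have "0 \<le> 2 * real j * r" using \<open>0 < r\<close> by simp
    show ?thesis
    proof
      fix t assume "t \<in> {x j - r<..<x j + r}"
      hence "\<alpha> + 2 * real j * r < t" "t < \<alpha> + (2 * real j + 2) * r" unfolding ends by auto
      thus "t \<in> {\<alpha><..<\<alpha> + 2 * real N * r}"
        using \<open>0 \<le> 2 * real j * r\<close> below[OF that] by (simp only: greaterThanLessThan_iff) linarith
    qed
  qed
  show "x j \<in> {\<alpha><..<\<alpha> + 2 * real N * r}" if "j < N"
  proof -
    have "x j \<in> {x j - r<..<x j + r}" using \<open>0 < r\<close> by simp
    thus ?thesis using sub[OF that] by blast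
  qed
qed

lemma grid_tent_avoiding:
  fixes \<alpha> r :: real and N :: nat and P :: "real set"
  assumes "0 < r" and x: "\<And>j. x j = \<alpha> + (2 * real j + 1) * r"
    and "{\<alpha><..<\<alpha> + 2 * real N * r} \<subseteq> J" "J \<subseteq> I" "0 \<notin> J" "finite P" "card P < N"
  obtains k where "k < N" "tent (x k) r \<in> Lip0 I" "lipconst I (tent (x k) r) \<le> 1"
    "\<And>t. t \<in> P \<Longrightarrow> tent (x k) r t = 0" "\<And>t. t \<notin> J \<Longrightarrow> tent (x k) r t = 0"
    "\<And>j. tent (x k) r (x j) = (if j = k then r else 0)"
proof -
  define cell where "cell j = {x j - r<..<x j + r}" for j
  have cell_J: "cell j \<subseteq> J" if "j < N" for j
    using grid_cells(2)[OF \<open>0 < r\<close> x that] assms(3) unfolding cell_def by blast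
  have x_cell: "x j \<in> cell j" for j using \<open>0 < r\<close> by (simp add: cell_def)
  obtain k where "k < N" and k_free: "cell k \<inter> P = {}"
    using pigeonhole_disjoint_family[OF grid_cells(1)[OF \<open>0 < r\<close> x] \<open>finite P\<close> \<open>card P < N\<close>]
    unfolding cell_def by blast
  have out: "tent (x k) r t = 0" if "t \<notin> cell k" for t
    using that unfolding cell_def by (rule tent_eq_0)
  show ?thesis
  proof (rule that[OF \<open>k < N\<close>])
    show "tent (x k) r \<in> Lip0 I" "lipconst I (tent (x k) r) \<le> 1"
      using tent_Lip0[of "x k" r I] cell_J[OF \<open>k < N\<close>] \<open>J \<subseteq> I\<close> \<open>0 \<notin> J\<close>
      unfolding cell_def by blast+
    show "tent (x k) r t = 0" if "t \<in> P" for t using k_free that out by blast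
    show "tent (x k) r t = 0" if "t \<notin> J" for t using cell_J[OF \<open>k < N\<close>] that out by blast
    show "tent (x k) r (x j) = (if j = k then r else 0)" for j
    proof (cases "j = k")
      case False
      hence "cell j \<inter> cell k = {}"
        using disjoint_family_onD[OF grid_cells(1)[OF \<open>0 < r\<close> x, of UNIV]] by (simp add: cell_def)
      hence "x j \<notin> cell k" using x_cell by blast
      thus ?thesis using out False by simp
    qed (use \<open>0 < r\<close> in \<open>simp add: tent_centre\<close>)
  qed
qed

section \<open>Recurrence for the linearization of \<open>f\<close>\<close>

lemma not_recurrent_if_bounded_away:
  assumes "0 < c" "\<forall>n\<ge>1. c \<le> dnorm I (\<lambda>\<phi>. (T ^^ n) \<mu> \<phi> - \<mu> \<phi>)"
  shows "\<mu> \<notin> recurrent_set I T"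
proof
  assume "\<mu> \<in> recurrent_set I T"
  hence "liminf (\<lambda>n. ereal (dnorm I (\<lambda>\<phi>. (T ^^ n) \<mu> \<phi> - \<mu> \<phi>))) = 0"
    by (simp add: recurrent_set_def)
  moreover have "ereal c \<le> liminf (\<lambda>n. ereal (dnorm I (\<lambda>\<phi>. (T ^^ n) \<mu> \<phi> - \<mu> \<phi>)))"
    by (rule Liminf_bounded) (use assms(2) in \<open>auto simp: eventually_sequentially\<close>)
  ultimately show False using assms(1) by simp
qed

lemma fixes_free_space_if_fixes_span:
  assumes "0 \<in> I" and R_maps_to: "R ` free_space I \<subseteq> free_space I"
    and R_linear: "\<forall>\<mu>\<in>free_space I. \<forall>\<nu>\<in>free_space I. \<forall>a b::real.
           R (\<lambda>\<phi>. a * \<mu> \<phi> + b * \<nu> \<phi>) = (\<lambda>\<phi>. a * R \<mu> \<phi> + b * R \<nu> \<phi>)"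
    and R_bounded: "\<forall>\<mu>\<in>free_space I. dnorm I (R \<mu>) \<le> C * dnorm I \<mu>"
    and R_fixes: "\<forall>\<nu>\<in>dirac_span I. R \<nu> = \<nu>"
    and \<mu>: "\<mu> \<in> free_space I"
  shows "R \<mu> = \<mu>"
proof (rule Lip0_dual_eqI)
  show R\<mu>: "R \<mu> \<in> Lip0_dual I" "\<mu> \<in> Lip0_dual I"
    using R_maps_to \<mu> by (auto intro: free_space_Lip0_dual)
  show "dnorm I (\<lambda>\<phi>. R \<mu> \<phi> - \<mu> \<phi>) \<le> 0"
  proof (rule field_le_epsilon)
    fix e :: real assume "0 < e"
    have "0 < \<bar>C\<bar> + 1" by (simp add: add_nonneg_pos)
    obtain \<nu> where \<nu>: "\<nu> \<in> dirac_span I" "dnorm I (\<lambda>\<phi>. \<mu> \<phi> - \<nu> \<phi>) < e / (\<bar>C\<bar> + 1)"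
      by (rule free_space_approxE[OF \<mu> divide_pos_pos[OF \<open>0 < e\<close> \<open>0 < \<bar>C\<bar> + 1\<close>]])
    define w where "w = (\<lambda>\<phi>. 1 * \<mu> \<phi> + (-1) * \<nu> \<phi>)"
    have "\<nu> \<in> free_space I" using \<nu>(1) dirac_span_subset_free_space[OF assms(1)] by blast
    hence w: "w \<in> free_space I" unfolding w_def using assms(1) \<mu> by (intro free_space_lincomb)
    have duals: "R w \<in> Lip0_dual I" "w \<in> Lip0_dual I"
      using R_maps_to w by (auto intro: free_space_Lip0_dual)
    have split: "(\<lambda>\<phi>. R \<mu> \<phi> - \<mu> \<phi>) = (\<lambda>\<phi>. 1 * R w \<phi> + (-1) * w \<phi>)"
      using R_linear[rule_format, OF \<mu> \<open>\<nu> \<in> free_space I\<close>, of 1 "-1"] R_fixes \<nu>(1)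
      by (simp add: w_def)
    have "dnorm I (\<lambda>\<phi>. R \<mu> \<phi> - \<mu> \<phi>) \<le> \<bar>1\<bar> * dnorm I (R w) + \<bar>-1\<bar> * dnorm I w"
      unfolding split by (rule dnorm_lincomb_le[OF duals])
    also have "\<dots> \<le> (\<bar>C\<bar> + 1) * dnorm I w"
    proof -
      have "0 \<le> dnorm I w" by (rule dnorm_nonneg[OF free_space_Lip0_dual[OF w]])
      hence "C * dnorm I w \<le> \<bar>C\<bar> * dnorm I w" by (intro mult_right_mono) auto
      moreover have "dnorm I (R w) \<le> C * dnorm I w" using R_bounded w by blast
      ultimately show ?thesis by (simp add: algebra_simps)
    qed
    also have "\<dots> < e" using \<nu>(2) \<open>0 < \<bar>C\<bar> + 1\<close> by (simp add: w_def pos_less_divide_eq mult.commute)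
    finally show "dnorm I (\<lambda>\<phi>. R \<mu> \<phi> - \<mu> \<phi>) \<le> 0 + e" by simp
  qed
qed

locale linearization =
  fixes I :: "real set" and f :: "real \<Rightarrow> real"
    and T :: "((real \<Rightarrow> real) \<Rightarrow> real) \<Rightarrow> ((real \<Rightarrow> real) \<Rightarrow> real)"
  assumes zero_in_I: "0 \<in> I"
    and f_maps_to: "f ` I \<subseteq> I"
    and T_maps_to: "T ` free_space I \<subseteq> free_space I"
    and T_linear: "\<forall>\<mu>\<in>free_space I. \<forall>\<nu>\<in>free_space I. \<forall>a b::real.
           T (\<lambda>\<phi>. a * \<mu> \<phi> + b * \<nu> \<phi>) = (\<lambda>\<phi>. a * T \<mu> \<phi> + b * T \<nu> \<phi>)"
    and T_dirac: "\<forall>x\<in>I. T (dirac I x) = dirac I (f x)"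
begin

lemma Tn_free: "\<mu> \<in> free_space I \<Longrightarrow> (T ^^ n) \<mu> \<in> free_space I"
  using funpow_mapsto[OF T_maps_to] .

lemma Tn_linear:
  assumes "\<mu> \<in> free_space I" "\<nu> \<in> free_space I"
  shows "(T ^^ n) (\<lambda>\<phi>. a * \<mu> \<phi> + b * \<nu> \<phi>) = (\<lambda>\<phi>. a * (T ^^ n) \<mu> \<phi> + b * (T ^^ n) \<nu> \<phi>)"
proof (induction n)
  case (Suc n)
  thus ?case using T_linear Tn_free[OF assms(1)] Tn_free[OF assms(2)] by simp
qed simp

lemma T_dirac_comb:
  assumes "finite K" "p ` K \<subseteq> I"
  shows "T (dirac_comb I K c p) = dirac_comb I K c (f \<circ> p)"
  using assms
proof (induction K rule: finite_induct)
  case empty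
  have "dirac_comb I {} c p \<in> free_space I"
    using dirac_span_subset_free_space[OF zero_in_I] dirac_comb_in_span[of "{}" p I c] by auto
  from T_linear[rule_format, OF this this, of 0 0] show ?case by (simp add: dirac_comb_def)
next
  case (insert k K)
  have "dirac I (p k) \<in> dirac_span I" "dirac_comb I K c p \<in> dirac_span I"
    using insert by (auto intro: dirac_in_span dirac_comb_in_span)
  hence d: "dirac I (p k) \<in> free_space I" and s: "dirac_comb I K c p \<in> free_space I"
    using dirac_span_subset_free_space[OF zero_in_I] by auto
  have "dirac_comb I (insert k K) c p = (\<lambda>\<phi>. c k * dirac I (p k) \<phi> + 1 * dirac_comb I K c p \<phi>)"
    using insert by (simp add: dirac_comb_def)
  hence "T (dirac_comb I (insert k K) c p) = (\<lambda>\<phi>. c k * T (dirac I (p k)) \<phi> + 1 * T (dirac_comb I K c p) \<phi>)"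
    by (simp only: T_linear[rule_format, OF d s])
  thus ?case using insert T_dirac by (simp add: dirac_comb_def)
qed

lemma Tn_dirac_comb:
  assumes "finite K" "p ` K \<subseteq> I"
  shows "(T ^^ n) (dirac_comb I K c p) = dirac_comb I K c ((f ^^ n) \<circ> p)"
proof (induction n)
  case (Suc n)
  have "((f ^^ n) \<circ> p) ` K \<subseteq> I" using assms(2) funpow_mapsto[OF f_maps_to] by auto
  thus ?case using Suc T_dirac_comb[OF assms(1)] by (simp add: comp_def)
qed simp

lemma Tn_dirac_pairs:
  assumes "finite K" "x ` K \<subseteq> I" "y ` K \<subseteq> I"
  shows "(T ^^ n) (dirac_pairs I K c x y) = dirac_pairs I K c ((f ^^ n) \<circ> x) ((f ^^ n) \<circ> y)"
proof -
  have "dirac_comb I K c x \<in> free_space I" "dirac_comb I K c y \<in> free_space I"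
    using assms dirac_comb_in_span dirac_span_subset_free_space[OF zero_in_I] by blast+
  thus ?thesis unfolding dirac_pairs_eq_dirac_comb
    by (simp only: Tn_linear Tn_dirac_comb[OF assms(1,2)] Tn_dirac_comb[OF assms(1,3)])
qed

lemma T_T_eq_if_involution:
  assumes inv: "\<forall>x\<in>I. f (f x) = x"
    and bounded: "\<forall>\<mu>\<in>free_space I. dnorm I (T \<mu>) \<le> C * dnorm I \<mu>"
    and \<mu>: "\<mu> \<in> free_space I"
  shows "T (T \<mu>) = \<mu>"
proof (rule fixes_free_space_if_fixes_span[OF zero_in_I _ _ _ _ \<mu>])
  show "(\<lambda>\<mu>. T (T \<mu>)) ` free_space I \<subseteq> free_space I" using T_maps_to by auto
  show "\<forall>\<mu>\<in>free_space I. \<forall>\<nu>\<in>free_space I. \<forall>a b::real.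
      T (T (\<lambda>\<phi>. a * \<mu> \<phi> + b * \<nu> \<phi>)) = (\<lambda>\<phi>. a * T (T \<mu>) \<phi> + b * T (T \<nu>) \<phi>)"
    using Tn_linear[of _ _ 2] by (simp add: numeral_2_eq_2)
  show "\<forall>\<mu>\<in>free_space I. dnorm I (T (T \<mu>)) \<le> (\<bar>C\<bar> * \<bar>C\<bar>) * dnorm I \<mu>"
  proof
    fix \<mu> assume "\<mu> \<in> free_space I"
    hence T\<mu>: "T \<mu> \<in> free_space I" using T_maps_to by auto
    have abs_bound: "dnorm I (T \<nu>) \<le> \<bar>C\<bar> * dnorm I \<nu>" if "\<nu> \<in> free_space I" for \<nu>
    proof -
      have "C * dnorm I \<nu> \<le> \<bar>C\<bar> * dnorm I \<nu>"
        using dnorm_nonneg[OF free_space_Lip0_dual[OF that]] by (intro mult_right_mono) auto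
      thus ?thesis using bounded that by fastforce
    qed
    have "dnorm I (T (T \<mu>)) \<le> \<bar>C\<bar> * dnorm I (T \<mu>)" by (rule abs_bound[OF T\<mu>])
    also have "\<dots> \<le> \<bar>C\<bar> * (\<bar>C\<bar> * dnorm I \<mu>)"
      by (rule mult_left_mono[OF abs_bound[OF \<open>\<mu> \<in> free_space I\<close>] abs_ge_zero])
    finally show "dnorm I (T (T \<mu>)) \<le> (\<bar>C\<bar> * \<bar>C\<bar>) * dnorm I \<mu>" by (simp add: mult.assoc)
  qed
  show "\<forall>\<nu>\<in>dirac_span I. T (T \<nu>) = \<nu>"
  proof
    fix \<nu> assume "\<nu> \<in> dirac_span I"
    then obtain S :: "nat set" and c p where S: "finite S" "p ` S \<subseteq> I" "\<nu> = dirac_comb I S c p"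
      by (rule dirac_spanE)
    have "T (T \<nu>) = dirac_comb I S c ((f ^^ 2) \<circ> p)"
      using Tn_dirac_comb[OF S(1,2), of 2 c] S(3) by (simp add: numeral_2_eq_2)
    also have "\<dots> = \<nu>"
      unfolding S(3) dirac_comb_def using S(2) inv
      by (intro ext sum.cong refl) (auto simp: numeral_2_eq_2)
    finally show "T (T \<nu>) = \<nu>" .
  qed
qed

lemma recurrent_if_periodic:
  assumes \<mu>: "\<mu> \<in> free_space I" and "0 < m" and periodic: "(T ^^ m) \<mu> = \<mu>"
  shows "\<mu> \<in> recurrent_set I T"
proof -
  define X where "X n = ereal (dnorm I (\<lambda>\<phi>. (T ^^ n) \<mu> \<phi> - \<mu> \<phi>))" for n
  have "0 \<le> X n" for n
    unfolding X_def using Tn_free[OF \<mu>] \<mu>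
    by (simp add: dnorm_nonneg Lip0_dual_diff free_space_Lip0_dual)
  hence "0 \<le> liminf X" by (intro Liminf_bounded) auto
  have "(T ^^ (m * k)) \<mu> = \<mu>" for k
    by (induction k) (simp_all add: funpow_add periodic)
  hence "X \<circ> (\<lambda>k. m * k) = (\<lambda>k. 0)" by (simp add: X_def o_def dnorm_zero zero_ereal_def)
  moreover have "liminf X \<le> liminf (X \<circ> (\<lambda>k. m * k))"
    using \<open>0 < m\<close> by (intro liminf_subseq_mono) (simp add: strict_mono_def)
  ultimately have "liminf X = 0" using \<open>0 \<le> liminf X\<close> by (simp add: Liminf_const)
  thus ?thesis using \<mu> unfolding recurrent_set_def X_def by simp
qed

lemma recurrent_set_eq_free_space_if_involution:
  assumes "\<forall>x\<in>I. f (f x) = x" and "\<exists>C. \<forall>\<mu>\<in>free_space I. dnorm I (T \<mu>) \<le> C * dnorm I \<mu>"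
  shows "recurrent_set I T = free_space I"
proof
  show "recurrent_set I T \<subseteq> free_space I" by (auto simp: recurrent_set_def)
  obtain C where "\<forall>\<mu>\<in>free_space I. dnorm I (T \<mu>) \<le> C * dnorm I \<mu>" using assms(2) ..
  with assms(1) have "(T ^^ 2) \<mu> = \<mu>" if "\<mu> \<in> free_space I" for \<mu>
    using T_T_eq_if_involution that by (simp add: numeral_2_eq_2)
  thus "free_space I \<subseteq> recurrent_set I T" using recurrent_if_periodic[of _ 2] by auto
qed

lemma Tn_dirac_comb_plus_pairs:
  assumes "finite S" "p ` S \<subseteq> I" "finite K" "x ` K \<subseteq> I" "y ` K \<subseteq> I"
  shows "(T ^^ n) (\<lambda>\<phi>. dirac_comb I S c p \<phi> + dirac_pairs I K d x y \<phi>)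
       = (\<lambda>\<phi>. dirac_comb I S c ((f ^^ n) \<circ> p) \<phi> + dirac_pairs I K d ((f ^^ n) \<circ> x) ((f ^^ n) \<circ> y) \<phi>)"
proof -
  have "dirac_comb I S c p \<in> free_space I" "dirac_pairs I K d x y \<in> free_space I"
    using dirac_comb_in_span[OF assms(1,2)] dirac_pairs_in_span[OF assms(3-5)]
      dirac_span_subset_free_space[OF zero_in_I] by blast+
  moreover have "(\<lambda>\<phi>. dirac_comb I S c p \<phi> + dirac_pairs I K d x y \<phi>)
      = (\<lambda>\<phi>. 1 * dirac_comb I S c p \<phi> + 1 * dirac_pairs I K d x y \<phi>)"
    by simp
  ultimately show ?thesis
    by (simp only: Tn_linear Tn_dirac_comb[OF assms(1,2)] Tn_dirac_pairs[OF assms(3-5)]) simp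
qed

text \<open>
  The tent on a grid cell avoiding the supports of \<open>\<nu>\<close> and \<open>\<widehat>f\<^sup>n \<nu>\<close> sees only the perturbation;
  at time \<open>0\<close> it picks up the mass \<open>s r\<close> at the centre of its cell, at time \<open>n\<close> the twins cancel.
\<close>
lemma perturbation_moves_away:
  fixes \<alpha> r s :: real and N n :: nat and S :: "nat set"
  defines "J \<equiv> {\<alpha><..<\<alpha> + 2 * real N * r}"
  assumes "0 < r" "0 < s" "J \<subseteq> I" "0 \<notin> J" "finite S" "p ` S \<subseteq> I" "2 * card S < N" "1 \<le> n"
    and x: "\<And>j. x j = \<alpha> + (2 * real j + 1) * r"
    and twins: "\<And>j. j < N \<Longrightarrow> y j \<in> I - J \<and> orbits_agree_in f J (x j) (y j)"
    and \<mu>: "\<mu> = (\<lambda>\<phi>. dirac_comb I S c p \<phi> + dirac_pairs I {..<N} (\<lambda>_. s) x y \<phi>)"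
  shows "s * r \<le> dnorm I (\<lambda>\<phi>. (T ^^ n) \<mu> \<phi> - \<mu> \<phi>)"
proof -
  let ?P = "p ` S \<union> (f ^^ n) ` p ` S"
  have "card ?P \<le> card S + card S"
    by (intro card_Un_le[THEN order_trans] add_mono card_image_le[THEN order_trans] card_image_le)
      (use \<open>finite S\<close> in auto)
  hence "card ?P < N" using \<open>2 * card S < N\<close> by linarith
  moreover have "finite ?P" using \<open>finite S\<close> by simp
  moreover have "{\<alpha><..<\<alpha> + 2 * real N * r} \<subseteq> J" by (simp add: J_def)
  ultimately obtain k where "k < N" and \<psi>: "tent (x k) r \<in> Lip0 I" "lipconst I (tent (x k) r) \<le> 1"
    and \<psi>_P: "\<And>t. t \<in> ?P \<Longrightarrow> tent (x k) r t = 0" and \<psi>_J: "\<And>t. t \<notin> J \<Longrightarrow> tent (x k) r t = 0"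
    and \<psi>_x: "\<And>j. tent (x k) r (x j) = (if j = k then r else 0)"
    using grid_tent_avoiding[OF \<open>0 < r\<close> x _ \<open>J \<subseteq> I\<close> \<open>0 \<notin> J\<close>] by metis
  have "x j \<in> J" if "j < N" for j using grid_cells(3)[OF \<open>0 < r\<close> x that] by (simp add: J_def)
  hence xI: "x ` {..<N} \<subseteq> I" using \<open>J \<subseteq> I\<close> by blast
  have yI: "y ` {..<N} \<subseteq> I" using twins by auto
  have "\<mu> (tent (x k) r) = s * r"
  proof -
    have "dirac_comb I S c p (tent (x k) r) = 0"
      unfolding dirac_comb_apply[OF \<psi>(1)] using \<psi>_P by (intro sum.neutral) auto
    moreover have "dirac_pairs I {..<N} (\<lambda>_. s) x y (tent (x k) r) = (\<Sum>j<N. if j = k then s * r else 0)"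
      unfolding dirac_pairs_apply[OF \<psi>(1)] using twins \<psi>_J \<psi>_x by (intro sum.cong) auto
    ultimately show ?thesis using \<open>k < N\<close> by (simp add: \<mu>)
  qed
  moreover have "(T ^^ n) \<mu> (tent (x k) r) = 0"
  proof -
    have "tent (x k) r ((f ^^ n) (x j)) = tent (x k) r ((f ^^ n) (y j))" if "j < N" for j
    proof -
      have "(f ^^ n) (x j) = (f ^^ n) (y j) \<or> (f ^^ n) (x j) \<notin> J \<and> (f ^^ n) (y j) \<notin> J"
        using twins[OF that] \<open>1 \<le> n\<close> unfolding orbits_agree_in_def by blast
      thus ?thesis using \<psi>_J by auto
    qed
    thus ?thesis
      unfolding \<mu> Tn_dirac_comb_plus_pairs[OF \<open>finite S\<close> \<open>p ` S \<subseteq> I\<close> finite_lessThan xI yI]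
        dirac_comb_apply[OF \<psi>(1)] dirac_pairs_apply[OF \<psi>(1)]
      using \<psi>_P by (simp add: sum.neutral)
  qed
  moreover have "(\<lambda>\<phi>. (T ^^ n) \<mu> \<phi> - \<mu> \<phi>) \<in> Lip0_dual I" (is "?d \<in> _")
  proof -
    have "\<mu> \<in> free_space I"
      unfolding \<mu> using dirac_comb_plus_pairs_in_span[OF \<open>finite S\<close> \<open>p ` S \<subseteq> I\<close> finite_lessThan xI yI]
        dirac_span_subset_free_space[OF zero_in_I] by blast
    thus ?thesis using Tn_free by (simp add: Lip0_dual_diff free_space_Lip0_dual)
  qed
  ultimately show ?thesis using abs_le_dnorm[OF _ \<psi>, of ?d] \<open>0 < s\<close> \<open>0 < r\<close> by simp
qed

lemma non_recurrent_near_span: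
  assumes "\<alpha> < \<beta>" "{\<alpha><..<\<beta>} \<subseteq> I" "0 \<notin> {\<alpha><..<\<beta>}" and twinned: "twinned f I {\<alpha><..<\<beta>}"
    and "\<nu> \<in> dirac_span I" "0 < e"
  obtains \<mu> where "\<mu> \<in> free_space I" "dnorm I (\<lambda>\<phi>. \<mu> \<phi> - \<nu> \<phi>) < e" "\<mu> \<notin> recurrent_set I T"
proof -
  obtain S :: "nat set" and c p where S: "finite S" "p ` S \<subseteq> I" "\<nu> = dirac_comb I S c p"
    using \<open>\<nu> \<in> dirac_span I\<close> by (rule dirac_spanE)
  define N where "N = 2 * card S + 1"
  define r where "r = (\<beta> - \<alpha>) / (2 * real N)"
  define x where "x j = \<alpha> + (2 * real j + 1) * r" for j
  have "0 < r" using \<open>\<alpha> < \<beta>\<close> by (simp add: r_def N_def)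
  have \<beta>: "\<beta> = \<alpha> + 2 * real N * r" by (simp add: r_def N_def)
  have "x j \<in> {\<alpha><..<\<beta>}" if "j < N" for j using grid_cells(3)[OF \<open>0 < r\<close> x_def that] by (simp add: \<beta>)
  hence "\<exists>y. y \<in> I - {\<alpha><..<\<beta>} \<and> orbits_agree_in f {\<alpha><..<\<beta>} (x j) y" if "j < N" for j
    using twinned that unfolding twinned_def by blast
  then obtain y where y: "\<And>j. j < N \<Longrightarrow> y j \<in> I - {\<alpha><..<\<beta>} \<and> orbits_agree_in f {\<alpha><..<\<beta>} (x j) (y j)"
    by metis
  have xI: "x ` {..<N} \<subseteq> I" using \<open>\<And>j. j < N \<Longrightarrow> x j \<in> {\<alpha><..<\<beta>}\<close> assms(2) by blast
  have yI: "y ` {..<N} \<subseteq> I" using y by blast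
  define D where "D = (\<Sum>j<N. \<bar>x j - y j\<bar>)"
  define s where "s = e / (D + 1)"
  have "0 \<le> D" by (simp add: D_def sum_nonneg)
  hence "0 < s" "s * D < e" using \<open>0 < e\<close> by (simp_all add: s_def field_simps)
  define \<mu> where "\<mu> = (\<lambda>\<phi>. dirac_comb I S c p \<phi> + dirac_pairs I {..<N} (\<lambda>_. s) x y \<phi>)"
  show ?thesis
  proof (rule that)
    show "\<mu> \<in> free_space I"
      unfolding \<mu>_def using dirac_comb_plus_pairs_in_span[OF S(1,2) finite_lessThan xI yI]
        dirac_span_subset_free_space[OF zero_in_I] by blast
    have "dnorm I (\<lambda>\<phi>. \<mu> \<phi> - \<nu> \<phi>) \<le> (\<Sum>j<N. \<bar>s\<bar> * \<bar>x j - y j\<bar>)"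
      using dnorm_dirac_pairs_le[OF xI yI, of "\<lambda>_. s"] by (simp add: \<mu>_def S(3))
    thus "dnorm I (\<lambda>\<phi>. \<mu> \<phi> - \<nu> \<phi>) < e"
      using \<open>0 < s\<close> \<open>s * D < e\<close> by (simp add: D_def sum_distrib_left)
    show "\<mu> \<notin> recurrent_set I T"
    proof (rule not_recurrent_if_bounded_away)
      show "0 < s * r" using \<open>0 < s\<close> \<open>0 < r\<close> by simp
      show "\<forall>n\<ge>1. s * r \<le> dnorm I (\<lambda>\<phi>. (T ^^ n) \<mu> \<phi> - \<mu> \<phi>)"
      proof (intro allI impI)
        fix n :: nat assume "1 \<le> n"
        show "s * r \<le> dnorm I (\<lambda>\<phi>. (T ^^ n) \<mu> \<phi> - \<mu> \<phi>)"
          using assms(2,3) S(1,2) \<open>1 \<le> n\<close> y \<mu>_def unfolding \<beta>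
          by (intro perturbation_moves_away[OF \<open>0 < r\<close> \<open>0 < s\<close>, of \<alpha> N S p n x y \<mu> c])
            (simp_all add: N_def x_def)
      qed
    qed
  qed
qed

lemma empty_interior_if_twinned_interval:
  assumes "\<alpha> < \<beta>" "{\<alpha><..<\<beta>} \<subseteq> I" "0 \<notin> {\<alpha><..<\<beta>}" "twinned f I {\<alpha><..<\<beta>}"
  shows "\<not> nonempty_interior_in_free I (recurrent_set I T)"
proof
  assume "nonempty_interior_in_free I (recurrent_set I T)"
  then obtain \<mu>\<^sub>0 \<epsilon> where \<mu>\<^sub>0: "\<mu>\<^sub>0 \<in> free_space I" "0 < \<epsilon>"
    and ball: "\<forall>\<mu>\<in>free_space I. dnorm I (\<lambda>\<phi>. \<mu> \<phi> - \<mu>\<^sub>0 \<phi>) < \<epsilon> \<longrightarrow> \<mu> \<in> recurrent_set I T"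
    unfolding nonempty_interior_in_free_def by blast
  obtain \<nu> where \<nu>: "\<nu> \<in> dirac_span I" "dnorm I (\<lambda>\<phi>. \<mu>\<^sub>0 \<phi> - \<nu> \<phi>) < \<epsilon> / 2"
    using free_space_approxE[of \<mu>\<^sub>0 I "\<epsilon> / 2"] \<mu>\<^sub>0 by auto
  have "0 < \<epsilon> / 2" using \<mu>\<^sub>0(2) by simp
  then obtain \<mu> where \<mu>: "\<mu> \<in> free_space I" "dnorm I (\<lambda>\<phi>. \<mu> \<phi> - \<nu> \<phi>) < \<epsilon> / 2" "\<mu> \<notin> recurrent_set I T"
    by (rule non_recurrent_near_span[OF assms \<nu>(1)])
  have "\<nu> \<in> free_space I" using \<nu>(1) dirac_span_subset_free_space[OF zero_in_I] by blast
  hence "(\<lambda>\<phi>. \<mu> \<phi> - \<nu> \<phi>) \<in> Lip0_dual I" "(\<lambda>\<phi>. \<mu>\<^sub>0 \<phi> - \<nu> \<phi>) \<in> Lip0_dual I"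
    using \<mu>(1) \<mu>\<^sub>0(1) by (simp_all add: Lip0_dual_diff free_space_Lip0_dual)
  from dnorm_lincomb_le[OF this, of 1 "-1"]
  have "dnorm I (\<lambda>\<phi>. \<mu> \<phi> - \<mu>\<^sub>0 \<phi>) < \<epsilon>" using \<mu>(2) \<nu>(2) by simp
  thus False using ball \<mu>(1,3) by blast
qed

lemma involution_if_recurrent_interior:
  assumes "connected I" "continuous_on I f" "f 0 = 0"
    and "nonempty_interior_in_free I (recurrent_set I T)"
  shows "\<forall>x\<in>I. f (f x) = x"
proof (rule ccontr)
  assume "\<not> (\<forall>x\<in>I. f (f x) = x)"
  then obtain x where "x \<in> I" "f (f x) \<noteq> x" by blast
  from twinned_interval_avoiding_0_if_not_involution[OF assms(1,2) f_maps_to zero_in_I assms(3) this]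
  obtain \<alpha> \<beta> where "\<alpha> < \<beta>" "{\<alpha><..<\<beta>} \<subseteq> I" "0 \<notin> {\<alpha><..<\<beta>}" "twinned f I {\<alpha><..<\<beta>}"
    by blast
  from empty_interior_if_twinned_interval[OF this] assms(4) show False by contradiction
qed

end

theorem theorem3p21:
  fixes I :: "real set" and f :: "real \<Rightarrow> real"
    and T :: "((real \<Rightarrow> real) \<Rightarrow> real) \<Rightarrow> ((real \<Rightarrow> real) \<Rightarrow> real)"
  assumes "closed I" and "connected I" and "0 \<in> I"
    and "\<exists>C. C-lipschitz_on I f" and "f ` I \<subseteq> I" and "f 0 = 0"
    and "T ` free_space I \<subseteq> free_space I"
    and "\<forall>\<mu>\<in>free_space I. \<forall>\<nu>\<in>free_space I. \<forall>a b::real.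
           T (\<lambda>\<phi>. a * \<mu> \<phi> + b * \<nu> \<phi>) = (\<lambda>\<phi>. a * T \<mu> \<phi> + b * T \<nu> \<phi>)"
    and "\<exists>C. \<forall>\<mu>\<in>free_space I. dnorm I (T \<mu>) \<le> C * dnorm I \<mu>"
    and "\<forall>x\<in>I. T (dirac I x) = dirac I (f x)"
    and "nonempty_interior_in_free I (recurrent_set I T)"
  shows "(\<forall>x\<in>I. f (f x) = x) \<and> recurrent_set I T = free_space I"
proof -
  interpret linearization I f T using assms(3,5,7,8,10) by unfold_locales
  have "continuous_on I f" using assms(4) lipschitz_on_continuous_on by blast
  hence involution: "\<forall>x\<in>I. f (f x) = x"
    using involution_if_recurrent_interior assms(2,6,11) by blast
  with recurrent_set_eq_free_space_if_involution[OF involution assms(9)] show ?thesis by blast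
qed

end
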